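(* Let $(G,k)$ be an instance and let $v_1,v_2,v_3,v_4$ be four distinct vertices such that $v_1$ is adjacent to each of $v_2,v_3,v_4$, no two of $v_2,v_3,v_4$ are adjacent, $d(v_1)=3$, and $d(v_4)=1$. Then $(G,k)$ is a yes-instance if and only if $(G-v_4,k)$ is a yes-instance.
   Context: Graphs are undirected, without self-loops, possibly with multi-edges; $d(v)$ is the number of edges incident to $v$ (counted with multiplicity). A vertex set induces a clique if between any two distinct vertices there is exactly one edge, and a tree if it is connected and acyclic (two parallel edges form a cycle). A feasible solution for $(G,k)$ is $X\subseteq V$, $|X|\le k$, with every connected component of $G-X$ a clique or a tree; $(G,k)$ is a yes-instance if one exists. *)

theory Defs
  imports Main
begin

text \<open>A finite multigraph without self-loops: a vertex set V and an edge multiplicity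
function m, where m x y is the number of parallel edges between x and y.\<close>

type_synonym 'a mgraph = "'a set \<times> ('a \<Rightarrow> 'a \<Rightarrow> nat)"

definition verts :: "'a mgraph \<Rightarrow> 'a set" where "verts G = fst G"
definition mult :: "'a mgraph \<Rightarrow> 'a \<Rightarrow> 'a \<Rightarrow> nat" where "mult G = snd G"

definition wf_mgraph :: "'a mgraph \<Rightarrow> bool" where
  "wf_mgraph G \<longleftrightarrow> finite (verts G)
     \<and> (\<forall>x y. mult G x y = mult G y x)
     \<and> (\<forall>x. mult G x x = 0)
     \<and> (\<forall>x y. mult G x y > 0 \<longrightarrow> x \<in> verts G \<and> y \<in> verts G)"

definition adj :: "'a mgraph \<Rightarrow> 'a \<Rightarrow> 'a \<Rightarrow> bool" where
  "adj G x y \<longleftrightarrow> mult G x y > 0"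

definition degree :: "'a mgraph \<Rightarrow> 'a \<Rightarrow> nat" where
  "degree G v = (\<Sum>u\<in>verts G. mult G v u)"

definition del_verts :: "'a mgraph \<Rightarrow> 'a set \<Rightarrow> 'a mgraph" where
  "del_verts G X = (verts G - X, \<lambda>x y. if x \<in> X \<or> y \<in> X then 0 else mult G x y)"

definition is_walk_in :: "'a mgraph \<Rightarrow> 'a set \<Rightarrow> 'a list \<Rightarrow> bool" where
  "is_walk_in G S xs \<longleftrightarrow> xs \<noteq> [] \<and> set xs \<subseteq> S
     \<and> (\<forall>i. Suc i < length xs \<longrightarrow> adj G (xs ! i) (xs ! Suc i))"

definition connected_in :: "'a mgraph \<Rightarrow> 'a set \<Rightarrow> bool" where
  "connected_in G S \<longleftrightarrow> S \<noteq> {} \<and>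
     (\<forall>x\<in>S. \<forall>y\<in>S. \<exists>xs. is_walk_in G S xs \<and> hd xs = x \<and> last xs = y)"

definition has_cycle_in :: "'a mgraph \<Rightarrow> 'a set \<Rightarrow> bool" where
  "has_cycle_in G S \<longleftrightarrow>
     (\<exists>x\<in>S. \<exists>y\<in>S. mult G x y \<ge> 2)
     \<or> (\<exists>xs. is_walk_in G S xs \<and> distinct xs \<and> length xs \<ge> 3 \<and> adj G (last xs) (hd xs))"

definition induces_clique :: "'a mgraph \<Rightarrow> 'a set \<Rightarrow> bool" where
  "induces_clique G S \<longleftrightarrow> (\<forall>x\<in>S. \<forall>y\<in>S. x \<noteq> y \<longrightarrow> mult G x y = 1)"

definition induces_tree :: "'a mgraph \<Rightarrow> 'a set \<Rightarrow> bool" where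
  "induces_tree G S \<longleftrightarrow> connected_in G S \<and> \<not> has_cycle_in G S"

definition is_component :: "'a mgraph \<Rightarrow> 'a set \<Rightarrow> bool" where
  "is_component G C \<longleftrightarrow> C \<subseteq> verts G \<and> connected_in G C
     \<and> (\<forall>D. C \<subseteq> D \<and> D \<subseteq> verts G \<and> connected_in G D \<longrightarrow> D = C)"

definition feasible :: "'a mgraph \<Rightarrow> nat \<Rightarrow> 'a set \<Rightarrow> bool" where
  "feasible G k X \<longleftrightarrow> X \<subseteq> verts G \<and> card X \<le> k
     \<and> (\<forall>C. is_component (del_verts G X) C \<longrightarrow>
            induces_clique (del_verts G X) C \<or> induces_tree (del_verts G X) C)"

definition yes_instance :: "'a mgraph \<Rightarrow> nat \<Rightarrow> bool" where
  "yes_instance G k \<longleftrightarrow> (\<exists>X. feasible G k X)"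

end

theory Submission
  imports Defs
begin

(* Since d(v4) = 1, the vertex v4 is a leaf hanging at v1 by a single edge. Deleting a leaf
   keeps every component a clique or a tree (a tree minus a leaf is a tree), so a solution X
   of G yields the solution X - {v4} of G - v4. Conversely, a solution X of G - v4 is also
   one of G: if v1 is in X, then v4 is isolated in G - X; otherwise v4 is re-attached to the
   component of v1, which is a clique or a tree. In G - X - v4 the neighbours of v1 lie among
   the non-adjacent v2, v3, so a clique through v1 has at most two vertices and is a tree as
   well; attaching a leaf to a tree gives a tree. *)

lemma verts_del_verts [simp]: "verts (del_verts G X) = verts G - X"
  by (simp add: del_verts_def verts_def)

lemma mult_del_verts [simp]:
  "mult (del_verts G X) x y = (if x \<in> X \<or> y \<in> X then 0 else mult G x y)"
  by (simp add: del_verts_def mult_def)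

lemma del_verts_del_verts: "del_verts (del_verts G X) Y = del_verts G (X \<union> Y)"
  unfolding del_verts_def verts_def mult_def by (auto simp: fun_eq_iff)

lemma wf_mgraph_del_verts: "wf_mgraph G \<Longrightarrow> wf_mgraph (del_verts G X)"
  unfolding wf_mgraph_def by auto

definition clique_or_tree_components :: "'a mgraph \<Rightarrow> bool" where
  "clique_or_tree_components H \<longleftrightarrow>
     (\<forall>C. is_component H C \<longrightarrow> induces_clique H C \<or> induces_tree H C)"

lemma feasible_iff:
  "feasible G k X \<longleftrightarrow> X \<subseteq> verts G \<and> card X \<le> k \<and> clique_or_tree_components (del_verts G X)"
  unfolding feasible_def clique_or_tree_components_def ..

lemma feasible_del_verts_member:
  assumes "feasible G k X" "finite (verts G)" "p \<in> X"
  shows "feasible (del_verts G {p}) k (X - {p})"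
proof -
  have "finite X" using assms(1,2) unfolding feasible_def by (auto intro: finite_subset)
  then have "card (X - {p}) \<le> k" using assms(1) card_Diff1_le[of X p] unfolding feasible_def by simp
  moreover have "del_verts (del_verts G {p}) (X - {p}) = del_verts G X"
    using assms(3) by (simp add: del_verts_del_verts insert_absorb)
  ultimately show ?thesis using assms(1) unfolding feasible_def by auto
qed

definition edge_within :: "'a mgraph \<Rightarrow> 'a set \<Rightarrow> 'a \<Rightarrow> 'a \<Rightarrow> bool" where
  "edge_within H S x y \<longleftrightarrow> x \<in> S \<and> y \<in> S \<and> adj H x y"

lemma rtranclp_edge_within_if_walk:
  "is_walk_in H S xs \<Longrightarrow> (edge_within H S)\<^sup>*\<^sup>* (hd xs) (last xs)"
proof (induction xs)
  case Nil
  then show ?case by (simp add: is_walk_in_def)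
next
  case (Cons a xs)
  show ?case
  proof (cases "xs = []")
    case True
    then show ?thesis by simp
  next
    case False
    have "is_walk_in H S xs"
      using Cons.prems False unfolding is_walk_in_def by (auto simp: nth_Cons_Suc)
    moreover have "edge_within H S a (hd xs)"
      using Cons.prems False unfolding is_walk_in_def edge_within_def
      by (auto simp: hd_conv_nth dest: spec[of _ 0])
    ultimately show ?thesis
      using Cons.IH False by (simp add: converse_rtranclp_into_rtranclp)
  qed
qed

lemma walk_if_rtranclp_edge_within:
  "(edge_within H S)\<^sup>*\<^sup>* x y \<Longrightarrow> x \<in> S \<Longrightarrow> \<exists>xs. is_walk_in H S xs \<and> hd xs = x \<and> last xs = y"
proof (induction rule: rtranclp_induct)
  case base
  then show ?case by (intro exI[of _ "[x]"]) (simp add: is_walk_in_def)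
next
  case (step y z)
  then obtain xs where xs: "is_walk_in H S xs" "hd xs = x" "last xs = y" by blast
  then have "xs \<noteq> []" unfolding is_walk_in_def by simp
  have "is_walk_in H S (xs @ [z])"
    unfolding is_walk_in_def
  proof (intro conjI allI impI)
    show "set (xs @ [z]) \<subseteq> S" using xs step(2) unfolding is_walk_in_def edge_within_def by auto
    fix i assume i: "Suc i < length (xs @ [z])"
    show "adj H ((xs @ [z]) ! i) ((xs @ [z]) ! Suc i)"
    proof (cases "Suc i < length xs")
      case True
      then show ?thesis using xs(1) by (simp add: nth_append is_walk_in_def)
    next
      case False
      then have "i = length xs - 1" using i by simp
      then show ?thesis using \<open>xs \<noteq> []\<close> xs(3) step(2)
        by (simp add: nth_append edge_within_def last_conv_nth)
    qed
  qed simp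
  then show ?case using xs \<open>xs \<noteq> []\<close> by (intro exI[of _ "xs @ [z]"]) simp
qed

lemma connected_in_iff_rtranclp:
  "connected_in H S \<longleftrightarrow> S \<noteq> {} \<and> (\<forall>x\<in>S. \<forall>y\<in>S. (edge_within H S)\<^sup>*\<^sup>* x y)"
  unfolding connected_in_def
  using rtranclp_edge_within_if_walk walk_if_rtranclp_edge_within by metis

lemma rtranclp_edge_within_mono:
  "S \<subseteq> T \<Longrightarrow> (edge_within H S)\<^sup>*\<^sup>* x y \<Longrightarrow> (edge_within H T)\<^sup>*\<^sup>* x y"
  by (erule rtranclp_mono[THEN predicate2D, rotated]) (auto simp: edge_within_def)

lemma connected_in_insert:
  assumes "connected_in H S" "q \<in> S" "adj H q p" "adj H p q"
  shows "connected_in H (insert p S)"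
  unfolding connected_in_iff_rtranclp
proof (intro conjI ballI)
  fix x y assume "x \<in> insert p S" "y \<in> insert p S"
  moreover have "\<forall>x\<in>S. \<forall>y\<in>S. (edge_within H (insert p S))\<^sup>*\<^sup>* x y"
    using assms(1) rtranclp_edge_within_mono[of S "insert p S"]
    unfolding connected_in_iff_rtranclp by blast
  moreover have "edge_within H (insert p S) q p" "edge_within H (insert p S) p q"
    using assms by (auto simp: edge_within_def)
  ultimately show "(edge_within H (insert p S))\<^sup>*\<^sup>* x y"
    using assms(2)
    by (metis insert_iff rtranclp.rtrancl_refl rtranclp.rtrancl_into_rtrancl
        converse_rtranclp_into_rtranclp)
qed simp

lemma connected_in_remove_leaf:
  assumes conn: "connected_in H S" and "p \<in> S" "q \<in> S" "q \<noteq> p"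
    and leaf: "\<forall>y. adj H p y \<longrightarrow> y = q" and sym: "\<forall>x y. mult H x y = mult H y x"
  shows "connected_in H (S - {p})"
  unfolding connected_in_iff_rtranclp
proof (intro conjI ballI)
  fix x y assume x: "x \<in> S - {p}" and y: "y \<in> S - {p}"
  have "(edge_within H S)\<^sup>*\<^sup>* x y" using conn x y unfolding connected_in_iff_rtranclp by blast
  \<comment> \<open>A walk reaching p must come from q, so it can be cut back to q.\<close>
  then have "(y \<noteq> p \<longrightarrow> (edge_within H (S - {p}))\<^sup>*\<^sup>* x y)
      \<and> (y = p \<longrightarrow> (edge_within H (S - {p}))\<^sup>*\<^sup>* x q)"
  proof (induction rule: rtranclp_induct)
    case base
    then show ?case using x by simp
  next
    case (step y z)
    then have yz: "adj H y z" "adj H z y" "y \<in> S" "z \<in> S"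
      using sym by (auto simp: edge_within_def adj_def)
    consider "z = p" | "y = p" | "y \<noteq> p" "z \<noteq> p" by blast
    then show ?case
    proof cases
      case 1
      then show ?thesis using step.IH leaf yz \<open>q \<noteq> p\<close> by blast
    next
      case 2
      then show ?thesis using step.IH leaf yz by auto
    next
      case 3
      then have "edge_within H (S - {p}) y z" using yz by (simp add: edge_within_def)
      then show ?thesis using step.IH 3 by (auto intro: rtranclp.rtrancl_into_rtrancl)
    qed
  qed
  then show "(edge_within H (S - {p}))\<^sup>*\<^sup>* x y" using y by blast
qed (use assms in blast)

lemma connected_in_isolated:
  assumes "connected_in H S" "p \<in> S" "\<forall>y. \<not> adj H p y"
  shows "S = {p}"
proof -
  have "y = p" if "(edge_within H S)\<^sup>*\<^sup>* p y" for y
    using that by induction (use assms(3) in \<open>auto simp: edge_within_def\<close>)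
  then show ?thesis using assms(1,2) unfolding connected_in_iff_rtranclp by blast
qed

lemma is_walk_in_cong:
  assumes "\<forall>x\<in>S. \<forall>y\<in>S. mult H1 x y = mult H2 x y"
  shows "is_walk_in H1 S = is_walk_in H2 S"
proof
  fix xs
  have "adj H1 (xs ! i) (xs ! Suc i) = adj H2 (xs ! i) (xs ! Suc i)"
    if "set xs \<subseteq> S" "Suc i < length xs" for i
  proof -
    have "xs ! i \<in> S" "xs ! Suc i \<in> S" using that by (meson Suc_lessD nth_mem subsetD)+
    then show ?thesis using assms by (simp add: adj_def)
  qed
  then show "is_walk_in H1 S xs = is_walk_in H2 S xs" unfolding is_walk_in_def by blast
qed

lemma connected_in_cong:
  assumes "\<forall>x\<in>S. \<forall>y\<in>S. mult H1 x y = mult H2 x y"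
  shows "connected_in H1 S = connected_in H2 S"
  unfolding connected_in_def is_walk_in_cong[OF assms] ..

lemma has_cycle_in_cong:
  assumes agree: "\<forall>x\<in>S. \<forall>y\<in>S. mult H1 x y = mult H2 x y"
  shows "has_cycle_in H1 S = has_cycle_in H2 S"
proof -
  have "adj H1 (last xs) (hd xs) = adj H2 (last xs) (hd xs)" if "is_walk_in H2 S xs" for xs
    using that agree unfolding is_walk_in_def adj_def by (metis hd_in_set last_in_set subsetD)
  moreover have "(\<exists>x\<in>S. \<exists>y\<in>S. 2 \<le> mult H1 x y) = (\<exists>x\<in>S. \<exists>y\<in>S. 2 \<le> mult H2 x y)"
    using agree by auto
  ultimately show ?thesis unfolding has_cycle_in_def is_walk_in_cong[OF agree] by blast
qed

lemma induces_clique_cong: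
  assumes "\<forall>x\<in>S. \<forall>y\<in>S. mult H1 x y = mult H2 x y"
  shows "induces_clique H1 S = induces_clique H2 S"
  using assms unfolding induces_clique_def by auto

lemma induces_tree_cong:
  assumes "\<forall>x\<in>S. \<forall>y\<in>S. mult H1 x y = mult H2 x y"
  shows "induces_tree H1 S = induces_tree H2 S"
  unfolding induces_tree_def connected_in_cong[OF assms] has_cycle_in_cong[OF assms] ..

definition closed_under_adj :: "'a mgraph \<Rightarrow> 'a set \<Rightarrow> bool" where
  "closed_under_adj H C \<longleftrightarrow> (\<forall>x\<in>C. \<forall>y\<in>verts H. adj H x y \<longrightarrow> y \<in> C)"

lemma is_component_iff:
  assumes sym: "\<forall>x y. mult H x y = mult H y x"
  shows "is_component H C \<longleftrightarrow> C \<subseteq> verts H \<and> connected_in H C \<and> closed_under_adj H C"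
proof
  assume comp: "is_component H C"
  have "y \<in> C" if "x \<in> C" "y \<in> verts H" "adj H x y" for x y
  proof -
    have "connected_in H (insert y C)"
      using comp that sym connected_in_insert[of H C x y]
      unfolding is_component_def by (simp add: adj_def)
    then have "insert y C = C" using comp that(2) unfolding is_component_def by blast
    then show ?thesis by blast
  qed
  then show "C \<subseteq> verts H \<and> connected_in H C \<and> closed_under_adj H C"
    using comp unfolding is_component_def closed_under_adj_def by blast
next
  assume C: "C \<subseteq> verts H \<and> connected_in H C \<and> closed_under_adj H C"
  then obtain x where x: "x \<in> C" unfolding connected_in_def by blast
  have "D \<subseteq> C" if D: "C \<subseteq> D" "D \<subseteq> verts H" "connected_in H D" for D
  proof
    fix y assume "y \<in> D"
    then have "(edge_within H D)\<^sup>*\<^sup>* x y" using D x unfolding connected_in_iff_rtranclp by blast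
    then show "y \<in> C"
    proof induction
      case (step u w)
      then show ?case using C D unfolding closed_under_adj_def edge_within_def by blast
    qed (rule x)
  qed
  then show "is_component H C" using C unfolding is_component_def by blast
qed

lemma has_cycle_in_mono: "has_cycle_in H S \<Longrightarrow> S \<subseteq> T \<Longrightarrow> has_cycle_in H T"
  unfolding has_cycle_in_def is_walk_in_def by blast

lemma adj_cyclic_successor:
  assumes "is_walk_in H S xs" "adj H (last xs) (hd xs)" "i < length xs"
  shows "adj H (xs ! i) (xs ! (if Suc i = length xs then 0 else Suc i))"
proof (cases "Suc i = length xs")
  case True
  have "xs \<noteq> []" "i = length xs - 1" using assms(3) True by auto
  then have "xs ! i = last xs" "xs ! 0 = hd xs" by (auto simp: last_conv_nth hd_conv_nth)
  then show ?thesis using True assms(2) by simp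
next
  case False
  then show ?thesis using assms unfolding is_walk_in_def by simp
qed

text \<open>A cycle through p would have to enter and leave p via two distinct neighbours.\<close>
lemma leaf_not_on_cycle:
  assumes cycle: "is_walk_in H S xs" "distinct xs" "length xs \<ge> 3" "adj H (last xs) (hd xs)"
    and leaf: "\<forall>y. adj H p y \<longrightarrow> y = q" and sym: "\<forall>x y. mult H x y = mult H y x"
  shows "p \<notin> set xs"
proof
  assume "p \<in> set xs"
  define n where "n = length xs"
  obtain i where i: "i < n" "xs ! i = p" using \<open>p \<in> set xs\<close> n_def by (metis in_set_conv_nth)
  define k where "k = (if Suc i = n then 0 else Suc i)"
  define j where "j = (if i = 0 then n - 1 else i - 1)"
  have "n \<ge> 3" using cycle(3) n_def by simp
  then have jk: "j < n" "k < n" "j \<noteq> k" "(if Suc j = n then 0 else Suc j) = i"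
    using i(1) unfolding j_def k_def by auto
  have "adj H p (xs ! k)"
    using adj_cyclic_successor[OF cycle(1,4), of i] i n_def k_def by simp
  moreover have "adj H p (xs ! j)"
    using adj_cyclic_successor[OF cycle(1,4), of j] jk i n_def sym by (simp add: adj_def)
  ultimately have "xs ! j = xs ! k" using leaf by blast
  then show False using jk cycle(2) n_def nth_eq_iff_index_eq by blast
qed

lemma not_has_cycle_in_insert_leaf:
  assumes acyclic: "\<not> has_cycle_in H S" and "p \<notin> S"
    and leaf: "\<forall>y. adj H p y \<longrightarrow> y = q" and simple: "mult H p q \<le> 1"
    and sym: "\<forall>x y. mult H x y = mult H y x"
  shows "\<not> has_cycle_in H (insert p S)"
proof
  assume "has_cycle_in H (insert p S)"
  then consider (parallel) x y where "x \<in> insert p S" "y \<in> insert p S" "mult H x y \<ge> 2"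
    | (long) xs where "is_walk_in H (insert p S) xs" "distinct xs" "length xs \<ge> 3"
        "adj H (last xs) (hd xs)"
    unfolding has_cycle_in_def by blast
  then show False
  proof cases
    case parallel
    have le1: "mult H p z \<le> 1" for z
    proof (cases "z = q")
      case False
      then have "\<not> adj H p z" using leaf by blast
      then show ?thesis by (simp add: adj_def)
    qed (use simple in simp)
    have "x \<noteq> p" using le1[of y] parallel(3) by auto
    moreover have "y \<noteq> p" using le1[of x] parallel(3) sym[rule_format, of x p] by auto
    ultimately have "x \<in> S" "y \<in> S" using parallel by auto
    then show False using acyclic parallel unfolding has_cycle_in_def by blast
  next
    case long
    then have "p \<notin> set xs" using leaf_not_on_cycle[OF _ _ _ _ leaf sym] by blast
    then have "is_walk_in H S xs" using long unfolding is_walk_in_def by auto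
    then show False using acyclic long unfolding has_cycle_in_def by blast
  qed
qed

lemma induces_tree_insert_leaf:
  assumes tree: "induces_tree H S" and "q \<in> S" "p \<notin> S" "adj H p q"
    and leaf: "\<forall>y. adj H p y \<longrightarrow> y = q" "mult H p q \<le> 1"
    and sym: "\<forall>x y. mult H x y = mult H y x"
  shows "induces_tree H (insert p S)"
proof -
  have "adj H q p" using \<open>adj H p q\<close> sym unfolding adj_def by metis
  then have "connected_in H (insert p S)"
    using tree connected_in_insert[OF _ \<open>q \<in> S\<close> _ \<open>adj H p q\<close>]
    unfolding induces_tree_def by blast
  moreover have "\<not> has_cycle_in H (insert p S)"
    using tree not_has_cycle_in_insert_leaf[OF _ \<open>p \<notin> S\<close> leaf sym]
    unfolding induces_tree_def by blast
  ultimately show ?thesis unfolding induces_tree_def ..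
qed

lemma induces_tree_remove_leaf:
  assumes "induces_tree H S" "p \<in> S" "q \<in> S" "q \<noteq> p"
    and "\<forall>y. adj H p y \<longrightarrow> y = q" "\<forall>x y. mult H x y = mult H y x"
  shows "induces_tree H (S - {p})"
proof -
  have "connected_in H (S - {p})"
    using assms(1) connected_in_remove_leaf[OF _ assms(2-6)] unfolding induces_tree_def by blast
  moreover have "\<not> has_cycle_in H (S - {p})"
    using assms(1) has_cycle_in_mono[of H "S - {p}" S] unfolding induces_tree_def by blast
  ultimately show ?thesis unfolding induces_tree_def ..
qed

lemma induces_tree_if_clique_card_le_2:
  assumes "finite S" "card S \<le> 2" "S \<noteq> {}" "induces_clique H S" "\<forall>x. mult H x x = 0"
  shows "induces_tree H S"
  unfolding induces_tree_def
proof
  show "connected_in H S"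
    unfolding connected_in_iff_rtranclp
  proof (intro conjI ballI)
    fix x y assume "x \<in> S" "y \<in> S"
    then show "(edge_within H S)\<^sup>*\<^sup>* x y"
      using assms(4) by (cases "x = y") (auto simp: induces_clique_def edge_within_def adj_def)
  qed (use assms in simp)
  show "\<not> has_cycle_in H S"
  proof
    assume "has_cycle_in H S"
    then consider (parallel) x y where "x \<in> S" "y \<in> S" "mult H x y \<ge> 2"
      | (long) xs where "is_walk_in H S xs" "distinct xs" "length xs \<ge> 3"
      unfolding has_cycle_in_def by blast
    then show False
    proof cases
      case parallel
      then show False using assms(4,5) unfolding induces_clique_def by (cases "x = y") auto
    next
      case long
      then have "card (set xs) \<le> card S"
        using assms(1) unfolding is_walk_in_def by (simp add: card_mono)
      then show False using long assms(2) by (simp add: distinct_card)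
    qed
  qed
qed

lemma adj_in_verts: "wf_mgraph H \<Longrightarrow> adj H x y \<Longrightarrow> x \<in> verts H \<and> y \<in> verts H"
  unfolding wf_mgraph_def adj_def by blast

lemma mult_le_degree:
  assumes "wf_mgraph G"
  shows "mult G v u \<le> degree G v"
proof (cases "u \<in> verts G")
  case True
  then show ?thesis using assms unfolding degree_def wf_mgraph_def by (intro member_le_sum) auto
next
  case False
  then have "mult G v u = 0" using assms unfolding wf_mgraph_def by blast
  then show ?thesis by simp
qed

lemma card_neighbours_le_degree:
  assumes "wf_mgraph G"
  shows "card {u. adj G v u} \<le> degree G v"
proof -
  have neighbours: "{u. adj G v u} \<subseteq> verts G" using adj_in_verts[OF assms] by blast
  have "card {u. adj G v u} = (\<Sum>u\<in>{u. adj G v u}. 1)" by simp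
  also have "\<dots> \<le> (\<Sum>u\<in>{u. adj G v u}. mult G v u)" by (intro sum_mono) (simp add: adj_def)
  also have "\<dots> \<le> degree G v"
    unfolding degree_def using neighbours assms by (intro sum_mono2) (auto simp: wf_mgraph_def)
  finally show ?thesis .
qed

lemma neighbours_eq_if_card_eq_degree:
  assumes "wf_mgraph G" "A \<subseteq> {u. adj G v u}" "card A = degree G v"
  shows "{u. adj G v u} = A"
proof -
  have "finite {u. adj G v u}"
    using adj_in_verts[OF assms(1)] assms(1) unfolding wf_mgraph_def
    by (meson mem_Collect_eq rev_finite_subset subsetI)
  then show ?thesis
    using card_seteq assms(2,3) card_neighbours_le_degree[OF assms(1)] by metis
qed

lemma induces_tree_if_neighbours_independent_pair:
  assumes "wf_mgraph H" "is_component H C" "induces_clique H C \<or> induces_tree H C" "v \<in> C"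
    and neighbours: "{u. adj H v u} \<subseteq> {a, b}" and "\<not> adj H a b"
  shows "induces_tree H C"
proof (cases "induces_clique H C")
  case True
  have "C - {v} \<subseteq> {a, b}"
    using True assms(4) neighbours unfolding induces_clique_def adj_def by force
  moreover have "a \<in> C \<and> b \<in> C \<longrightarrow> a = b"
    using True \<open>\<not> adj H a b\<close> unfolding induces_clique_def adj_def by force
  ultimately obtain c where "C \<subseteq> {v, c}" by blast
  have "finite C" using assms(1,2) unfolding is_component_def wf_mgraph_def
    by (auto intro: finite_subset)
  have "card C \<le> card {v, c}" using \<open>C \<subseteq> {v, c}\<close> by (intro card_mono) auto
  also have "\<dots> \<le> 2" by (simp add: card_insert_if)
  finally show ?thesis
    using induces_tree_if_clique_card_le_2 \<open>finite C\<close> True assms(1,4)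
    unfolding wf_mgraph_def by blast
qed (use assms(3) in blast)

text \<open>The vertex p has at most the one neighbour q, joined to it by a single edge; p may be
  isolated, as happens to v4 once v1 is deleted.\<close>
locale pendant_vertex =
  fixes H :: "'a mgraph" and p q :: 'a
  assumes wf: "wf_mgraph H"
    and leaf: "\<forall>y. adj H p y \<longrightarrow> y = q"
    and simple: "mult H p q \<le> 1"
begin

abbreviation H' :: "'a mgraph" where "H' \<equiv> del_verts H {p}"

lemma sym: "\<forall>x y. mult H x y = mult H y x"
  using wf unfolding wf_mgraph_def by blast

lemma sym_del: "\<forall>x y. mult H' x y = mult H' y x"
  using sym by simp

lemma mult_del_agrees: "p \<notin> S \<Longrightarrow> \<forall>x\<in>S. \<forall>y\<in>S. mult H' x y = mult H x y"
  by auto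

lemma adj_sym: "adj H x y \<Longrightarrow> adj H y x"
  using sym unfolding adj_def by metis

lemma is_component_del_iff:
  assumes "p \<notin> C"
  shows "is_component H C \<longleftrightarrow> is_component H' C \<and> \<not> (q \<in> C \<and> adj H p q)"
proof -
  have "closed_under_adj H C \<longleftrightarrow> closed_under_adj H' C \<and> \<not> (q \<in> C \<and> adj H p q)"
  proof
    assume closed: "closed_under_adj H C"
    have "\<not> (q \<in> C \<and> adj H p q)"
      using closed assms adj_sym adj_in_verts[OF wf] unfolding closed_under_adj_def by blast
    moreover have "closed_under_adj H' C"
      using closed unfolding closed_under_adj_def by (auto simp: adj_def split: if_splits)
    ultimately show "closed_under_adj H' C \<and> \<not> (q \<in> C \<and> adj H p q)" by blast
  next
    assume "closed_under_adj H' C \<and> \<not> (q \<in> C \<and> adj H p q)"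
    then have closed': "closed_under_adj H' C" and not_q: "\<not> (q \<in> C \<and> adj H p q)" by blast+
    show "closed_under_adj H C"
      unfolding closed_under_adj_def
    proof (intro ballI impI)
      fix x y assume "x \<in> C" "y \<in> verts H" "adj H x y"
      moreover have "y \<noteq> p" using \<open>x \<in> C\<close> \<open>adj H x y\<close> not_q leaf adj_sym by blast
      ultimately have "adj H' x y" "y \<in> verts H'" using assms by (auto simp: adj_def)
      then show "y \<in> C" using closed' \<open>x \<in> C\<close> unfolding closed_under_adj_def by blast
    qed
  qed
  then show ?thesis
    using assms connected_in_cong[OF mult_del_agrees[OF assms]]
    unfolding is_component_iff[OF sym] is_component_iff[OF sym_del] by auto
qed

lemma closed_under_adj_insert_iff:
  assumes "p \<notin> C" "q \<in> C"
  shows "closed_under_adj H (insert p C) \<longleftrightarrow> closed_under_adj H' C"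
proof
  assume closed: "closed_under_adj H (insert p C)"
  show "closed_under_adj H' C"
    unfolding closed_under_adj_def
  proof (intro ballI impI)
    fix x y assume "x \<in> C" "y \<in> verts H'" "adj H' x y"
    then have "y \<in> verts H" "y \<noteq> p" "adj H x y" by (auto simp: adj_def split: if_splits)
    then show "y \<in> C" using closed \<open>x \<in> C\<close> unfolding closed_under_adj_def by blast
  qed
next
  assume closed': "closed_under_adj H' C"
  show "closed_under_adj H (insert p C)"
    unfolding closed_under_adj_def
  proof (intro ballI impI)
    fix x y assume "x \<in> insert p C" "y \<in> verts H" "adj H x y"
    then consider "x = p" | "y = p" | "x \<in> C" "y \<noteq> p" by blast
    then show "y \<in> insert p C"
    proof cases
      case 1
      then show ?thesis using leaf \<open>adj H x y\<close> assms(2) by blast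
    next
      case 3
      then have "adj H' x y" "y \<in> verts H'"
        using assms(1) \<open>adj H x y\<close> \<open>y \<in> verts H\<close> by (auto simp: adj_def)
      then show ?thesis using closed' 3 unfolding closed_under_adj_def by blast
    qed simp
  qed
qed

lemma is_component_insert_iff:
  assumes "p \<notin> C" "q \<in> C" "adj H p q"
  shows "is_component H (insert p C) \<longleftrightarrow> is_component H' C"
proof -
  have "q \<noteq> p" "p \<in> verts H" using assms(3) adj_in_verts[OF wf] wf
    unfolding wf_mgraph_def adj_def by auto
  have "connected_in H (insert p C) \<longleftrightarrow> connected_in H C"
  proof
    assume "connected_in H (insert p C)"
    then have "connected_in H (insert p C - {p})"
      using connected_in_remove_leaf[OF _ insertI1 insertI2[OF assms(2)] \<open>q \<noteq> p\<close> leaf sym] by blast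
    then show "connected_in H C" using assms(1) by simp
  next
    assume "connected_in H C"
    then show "connected_in H (insert p C)"
      using connected_in_insert[OF _ assms(2) adj_sym[OF assms(3)] assms(3)] by blast
  qed
  moreover have "closed_under_adj H (insert p C) \<longleftrightarrow> closed_under_adj H' C"
    by (rule closed_under_adj_insert_iff[OF assms(1,2)])
  ultimately show ?thesis
    unfolding is_component_iff[OF sym] is_component_iff[OF sym_del]
      connected_in_cong[OF mult_del_agrees[OF assms(1)]]
    using assms(1) \<open>p \<in> verts H\<close> by auto
qed

lemma clique_or_tree_components_del:
  assumes "clique_or_tree_components H"
  shows "clique_or_tree_components H'"
  unfolding clique_or_tree_components_def
proof (intro allI impI)
  fix C assume comp: "is_component H' C"
  then have "p \<notin> C" unfolding is_component_def by auto
  note agree = mult_del_agrees[OF this]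
  have "induces_clique H C \<or> induces_tree H C"
  proof (cases "q \<in> C \<and> adj H p q")
    case True
    then have "is_component H (insert p C)"
      using is_component_insert_iff[OF \<open>p \<notin> C\<close>] comp by blast
    then have "induces_clique H (insert p C) \<or> induces_tree H (insert p C)"
      using assms unfolding clique_or_tree_components_def by blast
    then show ?thesis
    proof
      assume "induces_clique H (insert p C)"
      then show ?thesis unfolding induces_clique_def by blast
    next
      assume "induces_tree H (insert p C)"
      moreover have "q \<noteq> p" using True \<open>p \<notin> C\<close> by blast
      ultimately have "induces_tree H (insert p C - {p})"
        using True induces_tree_remove_leaf[OF _ insertI1 insertI2[of q C p] _ leaf sym] by blast
      then show ?thesis using \<open>p \<notin> C\<close> by simp
    qed
  next
    case False
    then have "is_component H C" using is_component_del_iff[OF \<open>p \<notin> C\<close>] comp by blast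
    then show ?thesis using assms unfolding clique_or_tree_components_def by blast
  qed
  then show "induces_clique H' C \<or> induces_tree H' C"
    using induces_clique_cong[OF agree] induces_tree_cong[OF agree] by simp
qed

lemma clique_or_tree_components_if_del:
  assumes components: "clique_or_tree_components H'"
    and tree_at_q: "\<forall>C. is_component H' C \<longrightarrow> q \<in> C \<longrightarrow> adj H p q \<longrightarrow> induces_tree H' C"
  shows "clique_or_tree_components H"
  unfolding clique_or_tree_components_def
proof (intro allI impI)
  fix C assume comp: "is_component H C"
  consider "p \<notin> C" | "p \<in> C" "adj H p q" | "p \<in> C" "\<not> adj H p q" by blast
  then show "induces_clique H C \<or> induces_tree H C"
  proof cases
    case 1
    note agree = mult_del_agrees[OF 1]
    have "is_component H' C" using comp is_component_del_iff[OF 1] by blast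
    then show ?thesis using components induces_clique_cong[OF agree] induces_tree_cong[OF agree]
      unfolding clique_or_tree_components_def by metis
  next
    case 2
    have "q \<in> C"
      using comp 2 adj_in_verts[OF wf] unfolding is_component_iff[OF sym] closed_under_adj_def
      by blast
    define C' where "C' = C - {p}"
    have "q \<noteq> p" using 2(2) wf unfolding wf_mgraph_def adj_def by auto
    then have C': "C = insert p C'" "p \<notin> C'" "q \<in> C'"
      using 2(1) \<open>q \<in> C\<close> unfolding C'_def by auto
    then have "is_component H' C'" using comp is_component_insert_iff[OF C'(2,3) 2(2)] by simp
    then have "induces_tree H C'"
      using tree_at_q C' 2 induces_tree_cong[OF mult_del_agrees[OF C'(2)]] by simp
    then show ?thesis using induces_tree_insert_leaf[OF _ C'(3,2) 2(2) leaf simple sym] C'(1)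
      by simp
  next
    case 3
    then have "\<forall>y. \<not> adj H p y" using leaf by blast
    then have "C = {p}"
      using connected_in_isolated[OF _ 3(1)] comp unfolding is_component_def by blast
    then show ?thesis by (simp add: induces_clique_def)
  qed
qed

lemma pendant_vertex_del_verts: "pendant_vertex (del_verts H X) p q"
  using wf_mgraph_del_verts[OF wf] leaf simple by unfold_locales (auto simp: adj_def)

lemma feasible_del:
  assumes "feasible H k X"
  shows "feasible H' k (X - {p})"
proof (cases "p \<in> X")
  case True
  have "finite (verts H)" using wf unfolding wf_mgraph_def by blast
  then show ?thesis using feasible_del_verts_member[OF assms _ True] by blast
next
  case False
  interpret HX: pendant_vertex "del_verts H X" p q by (rule pendant_vertex_del_verts)
  have "clique_or_tree_components HX.H'"
    using HX.clique_or_tree_components_del assms unfolding feasible_iff by blast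
  moreover have "del_verts H' X = HX.H'" by (simp add: del_verts_del_verts Un_commute)
  moreover have "X \<subseteq> verts H'" "card X \<le> k" using assms False unfolding feasible_iff by auto
  ultimately show ?thesis using False unfolding feasible_iff by simp
qed

lemma feasible_if_feasible_del:
  assumes "feasible H' k X" and "{u. adj H q u} \<subseteq> {a, b, p}" "\<not> adj H a b"
  shows "feasible H k X"
proof -
  interpret HX: pendant_vertex "del_verts H X" p q by (rule pendant_vertex_del_verts)
  have X: "X \<subseteq> verts H" "card X \<le> k" "clique_or_tree_components HX.H'"
    using assms(1) unfolding feasible_iff del_verts_del_verts by auto
  have "{u. adj HX.H' q u} \<subseteq> {a, b}" "\<not> adj HX.H' a b"
    using assms(2,3) by (auto simp: adj_def)
  then have "\<forall>C. is_component HX.H' C \<longrightarrow> q \<in> C \<longrightarrow> induces_tree HX.H' C"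
    using X(3) induces_tree_if_neighbours_independent_pair[OF wf_mgraph_del_verts[OF HX.wf]]
    unfolding clique_or_tree_components_def by blast
  then have "clique_or_tree_components (del_verts H X)"
    using HX.clique_or_tree_components_if_del X(3) by blast
  then show ?thesis using X unfolding feasible_iff by blast
qed

end

theorem mainTheorem17:
  fixes G :: "'a mgraph" and k :: nat and v1 v2 v3 v4 :: 'a
  assumes "wf_mgraph G"
    and "v1 \<in> verts G" "v2 \<in> verts G" "v3 \<in> verts G" "v4 \<in> verts G"
    and "distinct [v1, v2, v3, v4]"
    and "adj G v1 v2" "adj G v1 v3" "adj G v1 v4"
    and "\<not> adj G v2 v3" "\<not> adj G v2 v4" "\<not> adj G v3 v4"
    and "degree G v1 = 3" "degree G v4 = 1"
  shows "yes_instance G k \<longleftrightarrow> yes_instance (del_verts G {v4}) k"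
proof -
  have "adj G v4 v1" using assms(1,9) unfolding wf_mgraph_def adj_def by metis
  then have "{u. adj G v4 u} = {v1}"
    using neighbours_eq_if_card_eq_degree[OF assms(1), of "{v1}" v4] assms(14) by simp
  moreover have "mult G v4 v1 \<le> 1" using mult_le_degree[OF assms(1)] assms(14) by metis
  ultimately interpret pendant_vertex G v4 v1 using assms(1) by unfold_locales auto
  have "{u. adj G v1 u} = {v2, v3, v4}"
    using neighbours_eq_if_card_eq_degree[OF assms(1), of "{v2, v3, v4}" v1] assms(6-9,13) by auto
  then have "feasible G k X" if "feasible (del_verts G {v4}) k X" for X
    using feasible_if_feasible_del[OF that _ assms(10)] by simp
  then show ?thesis using feasible_del unfolding yes_instance_def by blast
qed

end
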